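(* Let $\theta^*$ be an optimal solution of OPT with completion times $T_1^*,\dots,T_M^*$, and let $c_{i,j}$ be the constants from the CDR Rule (for every pair $i,j$, $s'(\theta_i^*(t))/s'(\theta_j^*(t))=c_{i,j}$ whenever $\theta_i^*(t)>0$ and $\theta_j^*(t)>0$). Let $i,j$ be jobs and $t_1,t_2$ times with $\max\{t_1,t_2\}<\min\{T_i^*,T_j^*\}$ such that $\theta_i^*(t_1)>0$, $\theta_j^*(t_1)>0$, $\theta_i^*(t_2)>0$ and $\theta_j^*(t_2)=0$. Then $$c_{i,j}=\frac{s'(\theta_i^*(t_1))}{s'(\theta_j^*(t_1))}\le\frac{s'(\theta_i^*(t_2))}{s'(0)}.$$
   Context: Setting (problem OPT). There are $M$ jobs, all available at time $0$, with sizes $x_1\ge x_2\ge\cdots\ge x_M>0$ and weights $0<w_1\le w_2\le\cdots\le w_M$. A total resource $B>0$ is shared. The speedup function $s:[0,B]\to[0,\infty)$ satisfies: $s(0)=0$; $s$ is strictly increasing, strictly concave, differentiable, and $s'$ is continuous on $[0,B]$ (so $s'>0$ and $s'$ is strictly decreasing). A schedule consists of functions $\theta_i:(0,\infty)\to[0,B]$, $i=1,\dots,M$, each right-continuous in $t$, with $\sum_{i=1}^M\theta_i(t)\le B$ for all $t>0$. The service received by job $i$ on $[t_1,t_2]$ is $Q_i(t_1,t_2)=\int_{t_1}^{t_2}s(\theta_i(t))\,dt$. The completion time $T_i$ of job $i$ satisfies $Q_i(0,T_i)=x_i$, and $\theta_i(t)=0$ for $t>T_i$. OPT is the problem of choosing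 a schedule minimizing $J=\sum_{i=1}^M w_iT_i$. An optimal solution is a feasible schedule attaining the minimum; $T_i^*$ denotes its completion times. *)

theory Defs
  imports "HOL-Analysis.Analysis"
begin

definition strictly_concave_on :: "real set \<Rightarrow> (real \<Rightarrow> real) \<Rightarrow> bool" where
  "strictly_concave_on S f \<longleftrightarrow> convex S \<and>
     (\<forall>x\<in>S. \<forall>y\<in>S. x \<noteq> y \<longrightarrow> (\<forall>u. 0 < u \<and> u < 1 \<longrightarrow>
        f (u * x + (1 - u) * y) > u * f x + (1 - u) * f y))"

definition speedup :: "real \<Rightarrow> (real \<Rightarrow> real) \<Rightarrow> (real \<Rightarrow> real) \<Rightarrow> bool" where
  "speedup B s s' \<longleftrightarrow> B > 0 \<and> s 0 = 0 \<and> strict_mono_on {0..B} s \<and>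
     strictly_concave_on {0..B} s \<and>
     (\<forall>y\<in>{0..B}. (s has_real_derivative s' y) (at y within {0..B})) \<and>
     continuous_on {0..B} s'"

text \<open>A feasible schedule for jobs 0..M-1 (indices shifted by one w.r.t. the paper):
  allocations theta i t (meaningful for t > 0) together with completion times T i.\<close>
definition feasible_schedule ::
  "nat \<Rightarrow> (nat \<Rightarrow> real) \<Rightarrow> real \<Rightarrow> (real \<Rightarrow> real) \<Rightarrow>
   (nat \<Rightarrow> real \<Rightarrow> real) \<Rightarrow> (nat \<Rightarrow> real) \<Rightarrow> bool" where
  "feasible_schedule M x B s \<theta> T \<longleftrightarrow>
     (\<forall>i<M. \<forall>t>0. 0 \<le> \<theta> i t \<and> \<theta> i t \<le> B) \<and>
     (\<forall>i<M. \<forall>t>0. continuous (at_right t) (\<theta> i)) \<and>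
     (\<forall>t>0. (\<Sum>i<M. \<theta> i t) \<le> B) \<and>
     (\<forall>i<M. T i \<ge> 0 \<and> ((\<lambda>t. s (\<theta> i t)) has_integral x i) {0..T i}) \<and>
     (\<forall>i<M. \<forall>t>T i. \<theta> i t = 0)"

definition total_cost :: "nat \<Rightarrow> (nat \<Rightarrow> real) \<Rightarrow> (nat \<Rightarrow> real) \<Rightarrow> real" where
  "total_cost M w T = (\<Sum>i<M. w i * T i)"

definition optimal_schedule ::
  "nat \<Rightarrow> (nat \<Rightarrow> real) \<Rightarrow> (nat \<Rightarrow> real) \<Rightarrow> real \<Rightarrow> (real \<Rightarrow> real) \<Rightarrow>
   (nat \<Rightarrow> real \<Rightarrow> real) \<Rightarrow> (nat \<Rightarrow> real) \<Rightarrow> bool" where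
  "optimal_schedule M x w B s \<theta> T \<longleftrightarrow>
     feasible_schedule M x B s \<theta> T \<and>
     (\<forall>\<theta>' T'. feasible_schedule M x B s \<theta>' T' \<longrightarrow> total_cost M w T \<le> total_cost M w T')"

end

(*
  Suppose the inequality fails and pick k with
  s'(theta_i(t2)) / s'(0) < k < s'(theta_i(t1)) / s'(theta_j(t1)).
  On a short window after t1 move k*mu units of resource from job j to job i, and on an
  equally short window after t2 move mu units from job i back to job j. To first order in mu,
  job i gains k*mu*s'(theta_i(t1)) - mu*s'(theta_i(t2)) > 0 and job j gains
  mu*s'(0) - k*mu*s'(theta_j(t1)) > 0 of service per unit time, while the total allocation does
  not grow. Right-continuity of the allocations and uniform continuity of s' on [0,B] make this
  first-order estimate valid on the whole windows. Both jobs therefore receive their work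
  strictly before their old completion times; cutting their allocations off there gives a
  feasible schedule of smaller cost, contradicting optimality.
*)
theory Submission
  imports Defs
begin

section \<open>Speedup functions\<close>

lemma speedupD:
  assumes "speedup B s s'"
  shows "0 < B" "s 0 = 0" "strict_mono_on {0..B} s" "strictly_concave_on {0..B} s"
    "\<And>y. y \<in> {0..B} \<Longrightarrow> (s has_real_derivative s' y) (at y within {0..B})"
    "continuous_on {0..B} s'"
  using assms unfolding speedup_def by auto

lemma speedup_continuous_on:
  assumes "speedup B s s'"
  shows "continuous_on {0..B} s"
  using speedupD(5)[OF assms] DERIV_continuous continuous_on_eq_continuous_within by blast

lemma speedup_has_real_derivative_at:
  assumes "speedup B s s'" "0 < y" "y < B"
  shows "(s has_real_derivative s' y) (at y)"
  using speedupD(5)[OF assms(1), of y] assms(2,3) at_within_Icc_at[of 0 y B] by auto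

lemma speedup_chord_le_deriv:
  assumes sp: "speedup B s s'" and p: "0 \<le> p" "p < c" "c \<le> B"
  shows "(s c - s p) / (c - p) \<le> s' p"
proof -
  have "(s has_real_derivative s' p) (at p within {p..c})"
    using speedupD(5)[OF sp, of p] p by (auto intro: DERIV_subset)
  then have lim: "((\<lambda>y. (s y - s p) / (y - p)) \<longlongrightarrow> s' p) (at_right p)"
    using has_field_derivative_iff at_within_Icc_at_right[OF p(2)] by metis
  have "(s c - s p) / (c - p) \<le> (s y - s p) / (y - p)" if y: "p < y" "y < c" for y
  proof -
    define u where "u = (y - p) / (c - p)"
    have u: "0 < u" "u < 1"
      using y p by (auto simp: u_def field_simps)
    have "u * (c - p) = y - p"
      using y by (simp add: u_def)
    then have yu: "y = u * c + (1 - u) * p"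
      by (simp add: algebra_simps)
    have "u * s c + (1 - u) * s p < s y"
      using speedupD(4)[OF sp] p u unfolding strictly_concave_on_def yu by auto
    then have "u * (s c - s p) / (y - p) \<le> (s y - s p) / (y - p)"
      using y by (intro divide_right_mono) (auto simp: algebra_simps)
    also have "u * (s c - s p) / (y - p) = (s c - s p) / (c - p)"
      using y p by (simp add: u_def divide_simps)
    finally show ?thesis .
  qed
  then have "\<forall>\<^sub>F y in at_right p. (s c - s p) / (c - p) \<le> (s y - s p) / (y - p)"
    using eventually_at_right_real[OF p(2)] by (auto elim: eventually_mono)
  then show ?thesis
    by (intro tendsto_lowerbound[OF lim]) simp_all
qed

lemma speedup_deriv_pos:
  assumes sp: "speedup B s s'" and p: "0 \<le> p" "p < B"
  shows "0 < s' p"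
proof -
  have "s p < s B"
    using speedupD(3)[OF sp] p unfolding strict_mono_on_def by auto
  then have "0 < (s B - s p) / (B - p)"
    using p by simp
  also have "\<dots> \<le> s' p"
    using speedup_chord_le_deriv[OF sp p order_refl] .
  finally show ?thesis .
qed

lemma speedup_deriv_nonneg:
  assumes sp: "speedup B s s'" and p: "p \<in> {0..B}"
  shows "0 \<le> s' p"
proof (rule continuous_ge_on_closure[where S = "{0..<B}" and f = s'])
  have "closure {0..<B} = {0..B}"
    using speedupD(1)[OF sp] by simp
  then show "continuous_on (closure {0..<B}) s'" "p \<in> closure {0..<B}"
    using speedupD(6)[OF sp] p by auto
  show "0 \<le> s' y" if "y \<in> {0..<B}" for y
    using speedup_deriv_pos[OF sp] that by (simp add: less_imp_le)
qed

lemma speedup_increment_approx: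
  assumes sp: "speedup B s s'"
    and unif: "\<forall>a\<in>{0..B}. \<forall>b\<in>{0..B}. \<bar>a - b\<bar> < \<rho> \<longrightarrow> \<bar>s' a - s' b\<bar> \<le> e"
    and p: "p \<in> {0..B}" and yc: "y \<in> {0..B}" "c \<in> {0..B}"
    and near: "\<bar>y - p\<bar> < \<rho>" "\<bar>c - p\<bar> < \<rho>"
  shows "\<bar>s c - s y - (c - y) * s' p\<bar> \<le> e * \<bar>c - y\<bar>"
proof -
  have mvt: "\<bar>s v - s u - (v - u) * s' p\<bar> \<le> e * \<bar>v - u\<bar>"
    if uv: "u \<in> {0..B}" "v \<in> {0..B}" "u < v" "\<bar>u - p\<bar> < \<rho>" "\<bar>v - p\<bar> < \<rho>" for u v
  proof -
    have "continuous_on {u..v} s"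
      using continuous_on_subset[OF speedup_continuous_on[OF sp]] uv by auto
    moreover have "s differentiable (at z)" if "u < z" "z < v" for z
      using speedup_has_real_derivative_at[OF sp, of z] that uv real_differentiable_def by auto
    ultimately obtain l z where z: "u < z" "z < v" "(s has_real_derivative l) (at z)"
      "s v - s u = (v - u) * l"
      using MVT[OF \<open>u < v\<close>] by blast
    have "l = s' z"
      using z uv speedup_has_real_derivative_at[OF sp, of z] DERIV_unique by auto
    then have "s v - s u - (v - u) * s' p = (v - u) * (s' z - s' p)"
      using z(4) by (simp add: algebra_simps)
    moreover have "\<bar>s' z - s' p\<bar> \<le> e"
      using unif p z uv by auto
    ultimately show ?thesis
      using uv by (simp add: abs_mult mult.commute mult_left_mono)
  qed
  show ?thesis
    using mvt[of y c] mvt[of c y] yc near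
    by (cases y c rule: linorder_cases) (auto simp: abs_minus_commute algebra_simps)
qed

lemma speedup_increment_lower_bound:
  assumes sp: "speedup B s s'"
    and unif: "\<forall>a\<in>{0..B}. \<forall>b\<in>{0..B}. \<bar>a - b\<bar> < \<rho> \<longrightarrow> \<bar>s' a - s' b\<bar> \<le> e" and e: "0 \<le> e"
    and pyc: "p \<in> {0..B}" "y \<in> {0..B}" "c \<in> {0..B}"
    and c: "c = p + d - \<eta>" and y: "\<bar>y - p\<bar> < \<eta>" and d: "\<bar>d\<bar> + \<eta> < \<rho>"
  shows "(d - 2 * \<eta>) * s' p - e * (\<bar>d\<bar> + 2 * \<eta>) \<le> s c - s y"
proof -
  have "\<bar>s c - s y - (c - y) * s' p\<bar> \<le> e * \<bar>c - y\<bar>"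
    using speedup_increment_approx[OF sp unif pyc] y d c by auto
  moreover have "(d - 2 * \<eta>) * s' p \<le> (c - y) * s' p"
    using c y speedup_deriv_nonneg[OF sp pyc(1)] by (intro mult_right_mono) auto
  moreover have "e * \<bar>c - y\<bar> \<le> e * (\<bar>d\<bar> + 2 * \<eta>)"
    using c y e by (intro mult_left_mono) auto
  ultimately show ?thesis
    by (simp add: abs_le_iff)
qed

section \<open>Right-continuous allocations and their service\<close>

lemma eventually_at_right_mem_Ico:
  fixes t u v :: real
  shows "\<forall>\<^sub>F y in at_right t. y \<in> {u..<v} \<longleftrightarrow> t \<in> {u..<v}"
proof (cases "t < u")
  case True
  then show ?thesis
    using eventually_at_right_real[OF True] by (auto elim: eventually_mono)
next
  case False
  show ?thesis
  proof (cases "t < v")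
    case True
    then show ?thesis
      using eventually_at_right_real[OF True] False by (auto elim: eventually_mono)
  next
    case False
    then show ?thesis
      using eventually_at_right_less[of t] by (auto elim: eventually_mono)
  qed
qed

lemma eventually_at_right_mem_atLeast:
  fixes t u :: real
  shows "\<forall>\<^sub>F y in at_right t. y \<in> {u..} \<longleftrightarrow> t \<in> {u..}"
proof (cases "t < u")
  case True
  then show ?thesis
    using eventually_at_right_real[OF True] by (auto elim: eventually_mono)
next
  case False
  then show ?thesis
    using eventually_at_right_less[of t] by (auto elim: eventually_mono)
qed

lemma continuous_at_right_override_on:
  fixes f g :: "real \<Rightarrow> real"
  assumes f: "continuous (at_right t) f" and g: "continuous (at_right t) g"
    and A: "\<forall>\<^sub>F y in at_right t. y \<in> A \<longleftrightarrow> t \<in> A"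
  shows "continuous (at_right t) (override_on f g A)"
proof (cases "t \<in> A")
  case True
  have "\<forall>\<^sub>F y in at_right t. g y = override_on f g A y"
    using A True by (auto elim: eventually_mono)
  with g True show ?thesis
    unfolding continuous_within by (simp add: tendsto_cong)
next
  case False
  have "\<forall>\<^sub>F y in at_right t. f y = override_on f g A y"
    using A False by (auto elim: eventually_mono)
  with f False show ?thesis
    unfolding continuous_within by (simp add: tendsto_cong)
qed

lemma eventually_at_right_window:
  fixes f :: "real \<Rightarrow> real"
  assumes f: "continuous (at_right t) f" and \<eta>: "0 < \<eta>"
  shows "\<forall>\<^sub>F d in at_right 0. \<forall>y\<in>{t..t + d}. \<bar>f y - f t\<bar> < \<eta>"
proof -
  have "\<forall>\<^sub>F y in at_right t. dist (f y) (f t) < \<eta>"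
    using f \<eta> unfolding continuous_within by (rule tendstoD)
  then obtain b where b: "t < b" "\<And>y. t < y \<Longrightarrow> y < b \<Longrightarrow> \<bar>f y - f t\<bar> < \<eta>"
    unfolding eventually_at_right_field dist_real_def by blast
  have "\<forall>y\<in>{t..t + d}. \<bar>f y - f t\<bar> < \<eta>" if "d \<in> {0<..<b - t}" for d
  proof
    fix y assume "y \<in> {t..t + d}"
    then show "\<bar>f y - f t\<bar> < \<eta>"
      using b that \<eta> by (cases "y = t") auto
  qed
  then show ?thesis
    using eventually_at_right_real[of 0 "b - t"] b(1) by (auto elim: eventually_mono)
qed

lemma right_continuous_two_windows:
  fixes h g :: "real \<Rightarrow> real"
  assumes rc: "continuous (at_right t1) h" "continuous (at_right t1) g"
    "continuous (at_right t2) h" "continuous (at_right t2) g"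
    and t: "t1 \<noteq> t2" "max t1 t2 < T" and \<eta>: "0 < \<eta>"
  obtains \<delta> where "0 < \<delta>" "\<delta> < \<bar>t1 - t2\<bar>" "max t1 t2 + \<delta> \<le> T"
    "\<And>t. t \<in> {t1..t1 + \<delta>} \<Longrightarrow> \<bar>h t - h t1\<bar> < \<eta> \<and> \<bar>g t - g t1\<bar> < \<eta>"
    "\<And>t. t \<in> {t2..t2 + \<delta>} \<Longrightarrow> \<bar>h t - h t2\<bar> < \<eta> \<and> \<bar>g t - g t2\<bar> < \<eta>"
proof -
  have "\<forall>\<^sub>F d in at_right 0. d \<in> {0<..<min \<bar>t1 - t2\<bar> (T - max t1 t2)}"
    using t by (intro eventually_at_right_real) auto
  moreover note eventually_at_right_window[OF rc(1) \<eta>] eventually_at_right_window[OF rc(2) \<eta>]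
    eventually_at_right_window[OF rc(3) \<eta>] eventually_at_right_window[OF rc(4) \<eta>]
  ultimately have "\<forall>\<^sub>F d in at_right 0. 0 < d \<and> d < \<bar>t1 - t2\<bar> \<and> max t1 t2 + d \<le> T \<and>
      (\<forall>t\<in>{t1..t1 + d}. \<bar>h t - h t1\<bar> < \<eta> \<and> \<bar>g t - g t1\<bar> < \<eta>) \<and>
      (\<forall>t\<in>{t2..t2 + d}. \<bar>h t - h t2\<bar> < \<eta> \<and> \<bar>g t - g t2\<bar> < \<eta>)"
    by eventually_elim auto
  then show ?thesis
    using that eventually_happens'[OF trivial_limit_at_right_real] by blast
qed

lemma has_integral_override_on_const:
  fixes F :: "real \<Rightarrow> real"
  assumes F: "(F has_integral X) {a..b}" and window: "a \<le> u" "0 \<le> \<delta>" "u + \<delta> \<le> b"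
    and L: "\<And>t. t \<in> {u..u + \<delta>} \<Longrightarrow> L \<le> c - F t"
  obtains X' where "(override_on F (\<lambda>_. c) {u..<u + \<delta>} has_integral X') {a..b}"
    "X + \<delta> * L \<le> X'"
proof -
  have "(\<lambda>t. c - F t) integrable_on {u..u + \<delta>}"
    using integrable_subinterval_real[OF has_integral_integrable[OF F]] window
    by (auto intro: integrable_diff)
  then obtain I where I: "((\<lambda>t. c - F t) has_integral I) {u..u + \<delta>}"
    by blast
  have "\<delta> * L \<le> I"
    using has_integral_le[OF has_integral_const_real I] L window by auto
  have "((\<lambda>t. if t \<in> {u..u + \<delta>} then c - F t else 0) has_integral I) {a..b}"
    using has_integral_restrict_closed_subinterval[of _ I u "u + \<delta>" a b] I window by auto
  from has_integral_add[OF F this]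
  have "(override_on F (\<lambda>_. c) {u..<u + \<delta>} has_integral X + I) {a..b}"
    by (rule has_integral_spike_finite[rotated 2, where S = "{u + \<delta>}"]) (auto simp: override_on_def)
  then show ?thesis
    using that \<open>\<delta> * L \<le> I\<close> by auto
qed

lemma has_integral_initial_segment:
  fixes h :: "real \<Rightarrow> real"
  assumes h: "(h has_integral X) {a..b}" and ab: "a \<le> b" and x: "0 \<le> x" "x \<le> X"
  obtains c where "a \<le> c" "c \<le> b" "x < X \<Longrightarrow> c < b" "(h has_integral x) {a..c}"
proof -
  have hi: "h integrable_on {a..b}"
    using h by blast
  have "integral {a..a} h \<le> x" "x \<le> integral {a..b} h"
    using h x by (simp_all add: integral_unique)
  then obtain c where c: "a \<le> c" "c \<le> b" "integral {a..c} h = x"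
    using IVT'[OF _ _ ab indefinite_integral_continuous_1[OF hi]] by blast
  moreover have "(h has_integral x) {a..c}"
    using integrable_subinterval_real[OF hi, of a c] c by (auto simp: has_integral_integral)
  moreover have "c < b" if "x < X"
    using c h that by (cases "c = b") (auto simp: integral_unique)
  ultimately show ?thesis
    using that by blast
qed

section \<open>Shortening two completion times\<close>

lemma sum_le_sum_if_pair_le:
  fixes f g :: "'a \<Rightarrow> 'b::ordered_comm_monoid_add"
  assumes A: "finite A" "i \<in> A" "j \<in> A" "i \<noteq> j"
    and rest: "\<And>l. l \<in> A \<Longrightarrow> l \<noteq> i \<Longrightarrow> l \<noteq> j \<Longrightarrow> f l \<le> g l"
    and pair: "f i + f j \<le> g i + g j"
  shows "sum f A \<le> sum g A"
proof -
  have "sum f A = sum f (A - {i, j}) + sum f {i, j}" "sum g A = sum g (A - {i, j}) + sum g {i, j}"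
    using A by (metis empty_subsetI insert_subset sum.subset_diff)+
  moreover have "sum f (A - {i, j}) \<le> sum g (A - {i, j})"
    using rest by (intro sum_mono) auto
  ultimately show ?thesis
    using pair A(4) by (simp add: add_mono)
qed

lemma feasible_scheduleD:
  assumes "feasible_schedule M x B s \<theta> T" and "l < M"
  shows "\<And>t. 0 < t \<Longrightarrow> 0 \<le> \<theta> l t \<and> \<theta> l t \<le> B"
    "\<And>t. 0 < t \<Longrightarrow> continuous (at_right t) (\<theta> l)"
    "0 \<le> T l" "((\<lambda>t. s (\<theta> l t)) has_integral x l) {0..T l}"
    "\<And>t. T l < t \<Longrightarrow> \<theta> l t = 0"
  using assms unfolding feasible_schedule_def by auto

lemma feasible_schedule_sum_le:
  assumes "feasible_schedule M x B s \<theta> T" and "0 < t"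
  shows "(\<Sum>l<M. \<theta> l t) \<le> B"
  using assms unfolding feasible_schedule_def by auto

lemma feasible_schedule_pair_le:
  assumes feas: "feasible_schedule M x B s \<theta> T" and ij: "i < M" "j < M" "i \<noteq> j" and t: "0 < t"
  shows "\<theta> i t + \<theta> j t \<le> B"
proof -
  have "\<theta> i t + \<theta> j t = (\<Sum>l\<in>{i, j}. \<theta> l t)"
    using ij by simp
  also have "\<dots> \<le> (\<Sum>l<M. \<theta> l t)"
    using feasible_scheduleD(1)[OF feas _ t] ij by (intro sum_mono2) auto
  also have "\<dots> \<le> B"
    using feasible_schedule_sum_le[OF feas t] .
  finally show ?thesis .
qed

lemma feasible_schedule_replace_pair:
  assumes feas: "feasible_schedule M x B s \<theta> T" and ij: "i < M" "j < M" "i \<noteq> j"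
    and x_nonneg: "0 \<le> x i" "0 \<le> x j"
    and alloc: "\<And>t. 0 < t \<Longrightarrow> 0 \<le> f t \<and> 0 \<le> g t \<and> f t + g t \<le> \<theta> i t + \<theta> j t"
    and rc: "\<And>t. 0 < t \<Longrightarrow> continuous (at_right t) f \<and> continuous (at_right t) g"
    and fI: "((\<lambda>t. s (f t)) has_integral X) {0..T i}" "x i < X"
    and gI: "((\<lambda>t. s (g t)) has_integral Y) {0..T j}" "x j \<le> Y"
  obtains \<theta>' T' where "feasible_schedule M x B s \<theta>' T'" "T' i < T i" "\<And>l. T' l \<le> T l"
proof -
  have T0: "0 \<le> T i" "0 \<le> T j"
    using feasible_scheduleD(3)[OF feas] ij by auto
  obtain ci where ci: "0 \<le> ci" "ci < T i" "((\<lambda>t. s (f t)) has_integral x i) {0..ci}"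
    using has_integral_initial_segment[OF fI(1) T0(1) x_nonneg(1) less_imp_le[OF fI(2)]] fI(2) by blast
  obtain cj where cj: "0 \<le> cj" "cj \<le> T j" "((\<lambda>t. s (g t)) has_integral x j) {0..cj}"
    using has_integral_initial_segment[OF gI(1) T0(2) x_nonneg(2) gI(2)] by blast
  define F where "F = override_on f (\<lambda>_. 0) {ci..}"
  define G where "G = override_on g (\<lambda>_. 0) {cj..}"
  define \<theta>' where "\<theta>' = \<theta>(i := F, j := G)"
  define T' where "T' = T(i := ci, j := cj)"
  have FG: "0 \<le> F t" "0 \<le> G t" "F t + G t \<le> \<theta> i t + \<theta> j t" if "0 < t" for t
    using alloc[OF that] by (auto simp: F_def G_def override_on_def)
  have "feasible_schedule M x B s \<theta>' T'"
    unfolding feasible_schedule_def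
  proof (intro conjI allI impI)
    fix l t assume l: "l < M" and t: "0 < (t::real)"
    have "F t \<le> B" "G t \<le> B"
      using FG[OF t] feasible_schedule_pair_le[OF feas ij t] by linarith+
    then show "0 \<le> \<theta>' l t" "\<theta>' l t \<le> B"
      using FG[OF t] feasible_scheduleD(1)[OF feas l t] by (simp_all add: \<theta>'_def)
    have "continuous (at_right t) F" "continuous (at_right t) G"
      using rc[OF t] unfolding F_def G_def
      by (auto intro: continuous_at_right_override_on eventually_at_right_mem_atLeast)
    then show "continuous (at_right t) (\<theta>' l)"
      using feasible_scheduleD(2)[OF feas l t] by (simp add: \<theta>'_def)
  next
    fix t :: real assume t: "0 < t"
    have "(\<Sum>l<M. \<theta>' l t) \<le> (\<Sum>l<M. \<theta> l t)"
      using ij FG(3)[OF t] by (intro sum_le_sum_if_pair_le) (auto simp: \<theta>'_def)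
    then show "(\<Sum>l<M. \<theta>' l t) \<le> B"
      using feasible_schedule_sum_le[OF feas t] by linarith
  next
    fix l assume l: "l < M"
    have "((\<lambda>t. s (F t)) has_integral x i) {0..ci}"
      using ci(3) by (rule has_integral_spike_finite[rotated 2, where S = "{ci}"]) (auto simp: F_def)
    moreover have "((\<lambda>t. s (G t)) has_integral x j) {0..cj}"
      using cj(3) by (rule has_integral_spike_finite[rotated 2, where S = "{cj}"]) (auto simp: G_def)
    ultimately show "0 \<le> T' l" "((\<lambda>t. s (\<theta>' l t)) has_integral x l) {0..T' l}"
      using feasible_scheduleD(3,4)[OF feas l] ci(1) cj(1) by (simp_all add: \<theta>'_def T'_def)
  next
    fix l t assume "l < M" "T' l < t"
    then show "\<theta>' l t = 0"
      using feasible_scheduleD(5)[OF feas] by (simp add: \<theta>'_def T'_def F_def G_def split: if_splits)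
  qed
  moreover have "T' i < T i" "\<And>l. T' l \<le> T l"
    using ij ci cj by (auto simp: T'_def)
  ultimately show ?thesis
    using that by blast
qed

lemma total_cost_less:
  assumes w: "\<forall>l<M. 0 < w l" and i: "i < M" and T: "T' i < T i" "\<And>l. T' l \<le> T l"
  shows "total_cost M w T' < total_cost M w T"
  unfolding total_cost_def
proof (rule sum_strict_mono_ex1)
  show "\<forall>l\<in>{..<M}. w l * T' l \<le> w l * T l"
    using w T(2) by (simp add: less_imp_le)
  show "\<exists>l\<in>{..<M}. w l * T' l < w l * T l"
    using w i T(1) by auto
qed simp

section \<open>Exchanging resource between two jobs\<close>

lemma exchange_rate_choice:
  fixes P Q R S :: real
  assumes pos: "0 < P" "0 < Q" "0 \<le> R" "0 < S" and rates: "R / S < P / Q"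
  obtains k e where "0 < k" "0 < e" "e \<le> 1"
    "0 < (k - 2 * e) * P - e * (k + 2 * e) - (1 + 2 * e) * R - e * (1 + 2 * e)"
    "0 < (1 - 2 * e) * S - e * (1 + 2 * e) - (k + 2 * e) * Q - e * (k + 2 * e)"
proof -
  have "R * Q < P * S"
    using rates pos by (simp add: divide_simps)
  then have "R / P < S / Q" "0 \<le> R / P"
    using pos by (simp_all add: divide_simps mult.commute)
  then obtain k where "0 < k" "R / P < k" "k < S / Q"
    using dense by (metis le_less_trans)
  then have k: "0 < k" "R < k * P" "k * Q < S"
    using pos by (simp_all add: field_simps)
  have "((\<lambda>e. (k - 2 * e) * P - e * (k + 2 * e) - (1 + 2 * e) * R - e * (1 + 2 * e))
      \<longlongrightarrow> (k - 2 * 0) * P - 0 * (k + 2 * 0) - (1 + 2 * 0) * R - 0 * (1 + 2 * 0)) (at_right 0)"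
    by (intro tendsto_intros)
  then have "\<forall>\<^sub>F e in at_right 0. 0 < (k - 2 * e) * P - e * (k + 2 * e) - (1 + 2 * e) * R - e * (1 + 2 * e)"
    by (rule order_tendstoD(1)) (use k in simp)
  moreover have "((\<lambda>e. (1 - 2 * e) * S - e * (1 + 2 * e) - (k + 2 * e) * Q - e * (k + 2 * e))
      \<longlongrightarrow> (1 - 2 * 0) * S - 0 * (1 + 2 * 0) - (k + 2 * 0) * Q - 0 * (k + 2 * 0)) (at_right 0)"
    by (intro tendsto_intros)
  then have "\<forall>\<^sub>F e in at_right 0. 0 < (1 - 2 * e) * S - e * (1 + 2 * e) - (k + 2 * e) * Q - e * (k + 2 * e)"
    by (rule order_tendstoD(1)) (use k in simp)
  moreover have "\<forall>\<^sub>F e in at_right 0. e \<in> {0<..<1::real}"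
    by (rule eventually_at_right_real) simp
  ultimately have "\<forall>\<^sub>F e in at_right 0. 0 < e \<and> e \<le> 1 \<and>
      0 < (k - 2 * e) * P - e * (k + 2 * e) - (1 + 2 * e) * R - e * (1 + 2 * e) \<and>
      0 < (1 - 2 * e) * S - e * (1 + 2 * e) - (k + 2 * e) * Q - e * (k + 2 * e)"
    by eventually_elim auto
  then show ?thesis
    using that k(1) eventually_happens'[OF trivial_limit_at_right_real] by blast
qed

lemma speedup_two_window_gain:
  fixes h :: "real \<Rightarrow> real"
  assumes sp: "speedup B s s'"
    and unif: "\<forall>a\<in>{0..B}. \<forall>b\<in>{0..B}. \<bar>a - b\<bar> < \<rho> \<longrightarrow> \<bar>s' a - s' b\<bar> \<le> e" and e: "0 \<le> e"
    and hI: "((\<lambda>t. s (h t)) has_integral X) {0..T}" and range: "\<And>t. 0 < t \<Longrightarrow> h t \<in> {0..B}"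
    and windows: "0 < t1" "0 < t2" "0 \<le> \<delta>" "\<delta> < \<bar>t1 - t2\<bar>" "max t1 t2 + \<delta> \<le> T"
    and near1: "\<And>t. t \<in> {t1..t1 + \<delta>} \<Longrightarrow> \<bar>h t - p1\<bar> < \<eta>"
    and near2: "\<And>t. t \<in> {t2..t2 + \<delta>} \<Longrightarrow> \<bar>h t - p2\<bar> < \<eta>"
    and p: "p1 \<in> {0..B}" "p2 \<in> {0..B}"
    and c: "c1 = p1 + d1 - \<eta>" "c1 \<in> {0..B}" "c2 = p2 + d2 - \<eta>" "c2 \<in> {0..B}"
    and d: "\<bar>d1\<bar> + \<eta> < \<rho>" "\<bar>d2\<bar> + \<eta> < \<rho>"
  obtains X' where
    "((\<lambda>t. s (override_on (override_on h (\<lambda>_. c2) {t2..<t2 + \<delta>}) (\<lambda>_. c1) {t1..<t1 + \<delta>} t))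
      has_integral X') {0..T}"
    "X + \<delta> * ((d1 - 2 * \<eta>) * s' p1 - e * (\<bar>d1\<bar> + 2 * \<eta>) + ((d2 - 2 * \<eta>) * s' p2 - e * (\<bar>d2\<bar> + 2 * \<eta>))) \<le> X'"
proof -
  define G1 where "G1 = (d1 - 2 * \<eta>) * s' p1 - e * (\<bar>d1\<bar> + 2 * \<eta>)"
  define G2 where "G2 = (d2 - 2 * \<eta>) * s' p2 - e * (\<bar>d2\<bar> + 2 * \<eta>)"
  define F where "F = override_on (\<lambda>t. s (h t)) (\<lambda>_. s c2) {t2..<t2 + \<delta>}"
  have "G2 \<le> s c2 - s (h t)" if "t \<in> {t2..t2 + \<delta>}" for t
    unfolding G2_def using near2[OF that] range[of t] that windows(2) p c d
    by (intro speedup_increment_lower_bound[OF sp unif e]) auto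
  moreover have "t2 + \<delta> \<le> T" "t1 + \<delta> \<le> T"
    using windows(5) by auto
  ultimately obtain X2 where X2: "(F has_integral X2) {0..T}" "X + \<delta> * G2 \<le> X2"
    using has_integral_override_on_const[OF hI less_imp_le[OF windows(2)] windows(3)]
    unfolding F_def by blast
  have "G1 \<le> s c1 - F t" if "t \<in> {t1..t1 + \<delta>}" for t
  proof -
    have "t \<notin> {t2..<t2 + \<delta>}"
      using that windows(4) by auto
    then show ?thesis
      unfolding G1_def F_def using near1[OF that] range[of t] that windows(1) p c d
      by (auto intro: speedup_increment_lower_bound[OF sp unif e])
  qed
  then obtain X' where X': "(override_on F (\<lambda>_. s c1) {t1..<t1 + \<delta>} has_integral X') {0..T}"
    "X2 + \<delta> * G1 \<le> X'"
    using has_integral_override_on_const[OF X2(1) less_imp_le[OF windows(1)] windows(3) \<open>t1 + \<delta> \<le> T\<close>]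
    by blast
  have "(\<lambda>t. s (override_on (override_on h (\<lambda>_. c2) {t2..<t2 + \<delta>}) (\<lambda>_. c1) {t1..<t1 + \<delta>} t))
      = override_on F (\<lambda>_. s c1) {t1..<t1 + \<delta>}"
    by (auto simp: F_def override_on_def)
  then show ?thesis
    using that X' X2(2) unfolding G1_def G2_def by (auto simp: algebra_simps)
qed

text \<open>Every new level is lowered by \<eta>, which leaves room for the
  fluctuation of h and g on the windows.\<close>
lemma speedup_two_window_transfer:
  fixes h g :: "real \<Rightarrow> real"
  assumes sp: "speedup B s s'"
    and unif: "\<forall>a\<in>{0..B}. \<forall>b\<in>{0..B}. \<bar>a - b\<bar> < \<rho> \<longrightarrow> \<bar>s' a - s' b\<bar> \<le> e" and e: "0 \<le> e"
    and alloc: "\<And>t. 0 < t \<Longrightarrow> 0 \<le> h t \<and> 0 \<le> g t \<and> h t + g t \<le> B"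
    and rc: "\<And>t. 0 < t \<Longrightarrow> continuous (at_right t) h \<and> continuous (at_right t) g"
    and hI: "((\<lambda>t. s (h t)) has_integral X) {0..Th}"
    and gI: "((\<lambda>t. s (g t)) has_integral Y) {0..Tg}"
    and windows: "0 < t1" "0 < t2" "0 \<le> \<delta>" "\<delta> < \<bar>t1 - t2\<bar>" "max t1 t2 + \<delta> \<le> min Th Tg"
    and near1: "\<And>t. t \<in> {t1..t1 + \<delta>} \<Longrightarrow> \<bar>h t - p1\<bar> < \<eta> \<and> \<bar>g t - q1\<bar> < \<eta>"
    and near2: "\<And>t. t \<in> {t2..t2 + \<delta>} \<Longrightarrow> \<bar>h t - p2\<bar> < \<eta> \<and> \<bar>g t - q2\<bar> < \<eta>"
    and base: "p1 \<in> {0..B}" "q1 \<in> {0..B}" "p2 \<in> {0..B}" "q2 \<in> {0..B}"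
    and amounts: "0 \<le> p1 + d1 - \<eta>" "0 \<le> q1 - d1 - \<eta>" "0 \<le> p2 - d2 - \<eta>" "0 \<le> q2 + d2 - \<eta>"
      "\<bar>d1\<bar> + \<eta> < \<rho>" "\<bar>d2\<bar> + \<eta> < \<rho>"
  obtains f f' X' Y' where
    "\<And>t. 0 < t \<Longrightarrow> 0 \<le> f t \<and> 0 \<le> f' t \<and> f t + f' t \<le> h t + g t"
    "\<And>t. 0 < t \<Longrightarrow> continuous (at_right t) f \<and> continuous (at_right t) f'"
    "((\<lambda>t. s (f t)) has_integral X') {0..Th}"
    "X + \<delta> * ((d1 - 2 * \<eta>) * s' p1 - e * (\<bar>d1\<bar> + 2 * \<eta>) +
      ((- d2 - 2 * \<eta>) * s' p2 - e * (\<bar>d2\<bar> + 2 * \<eta>))) \<le> X'"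
    "((\<lambda>t. s (f' t)) has_integral Y') {0..Tg}"
    "Y + \<delta> * ((- d1 - 2 * \<eta>) * s' q1 - e * (\<bar>d1\<bar> + 2 * \<eta>) +
      ((d2 - 2 * \<eta>) * s' q2 - e * (\<bar>d2\<bar> + 2 * \<eta>))) \<le> Y'"
proof -
  define f where "f = override_on (override_on h (\<lambda>_. p2 - d2 - \<eta>) {t2..<t2 + \<delta>})
    (\<lambda>_. p1 + d1 - \<eta>) {t1..<t1 + \<delta>}"
  define f' where "f' = override_on (override_on g (\<lambda>_. q2 + d2 - \<eta>) {t2..<t2 + \<delta>})
    (\<lambda>_. q1 - d1 - \<eta>) {t1..<t1 + \<delta>}"
  have range: "h t \<in> {0..B}" "g t \<in> {0..B}" if "0 < t" for t
    using alloc[OF that] by auto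
  have sum1: "p1 + d1 - \<eta> + (q1 - d1 - \<eta>) < h t + g t" if "t \<in> {t1..t1 + \<delta>}" for t
    using near1[OF that] by (simp add: abs_less_iff)
  have sum2: "p2 - d2 - \<eta> + (q2 + d2 - \<eta>) < h t + g t" if "t \<in> {t2..t2 + \<delta>}" for t
    using near2[OF that] by (simp add: abs_less_iff)
  have le_B: "p1 + d1 - \<eta> \<le> B" "q1 - d1 - \<eta> \<le> B" "p2 - d2 - \<eta> \<le> B" "q2 + d2 - \<eta> \<le> B"
    using sum1[of t1] sum2[of t2] alloc[OF windows(1)] alloc[OF windows(2)] amounts windows(3)
    by auto
  have "max t1 t2 + \<delta> \<le> Th" "max t1 t2 + \<delta> \<le> Tg"
    using windows(5) by auto
  note gain_windows = windows(1-4) this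
  have levels: "p1 + d1 - \<eta> \<in> {0..B}" "p2 - d2 - \<eta> \<in> {0..B}"
    "q1 - d1 - \<eta> \<in> {0..B}" "q2 + d2 - \<eta> \<in> {0..B}"
    "p2 - d2 - \<eta> = p2 + - d2 - \<eta>" "q1 - d1 - \<eta> = q1 + - d1 - \<eta>"
    "\<bar>- d1\<bar> + \<eta> < \<rho>" "\<bar>- d2\<bar> + \<eta> < \<rho>"
    using amounts le_B by auto
  have "0 \<le> f t \<and> 0 \<le> f' t \<and> f t + f' t \<le> h t + g t" if "0 < t" for t
    using alloc[OF that] sum1[of t] sum2[of t] amounts by (auto simp: f_def f'_def override_on_def)
  moreover have "continuous (at_right t) f \<and> continuous (at_right t) f'" if "0 < t" for t
    using rc[OF that] unfolding f_def f'_def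
    by (intro conjI continuous_at_right_override_on continuous_const eventually_at_right_mem_Ico) auto
  moreover obtain X' where "((\<lambda>t. s (f t)) has_integral X') {0..Th}"
    "X + \<delta> * ((d1 - 2 * \<eta>) * s' p1 - e * (\<bar>d1\<bar> + 2 * \<eta>) +
      ((- d2 - 2 * \<eta>) * s' p2 - e * (\<bar>- d2\<bar> + 2 * \<eta>))) \<le> X'"
    using speedup_two_window_gain[OF sp unif e hI range(1) gain_windows(1-5) near1[THEN conjunct1]
        near2[THEN conjunct1] base(1,3) refl levels(1) levels(5,2) amounts(5) levels(8)]
    unfolding f_def by blast
  moreover obtain Y' where "((\<lambda>t. s (f' t)) has_integral Y') {0..Tg}"
    "Y + \<delta> * ((- d1 - 2 * \<eta>) * s' q1 - e * (\<bar>- d1\<bar> + 2 * \<eta>) +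
      ((d2 - 2 * \<eta>) * s' q2 - e * (\<bar>d2\<bar> + 2 * \<eta>))) \<le> Y'"
    using speedup_two_window_gain[OF sp unif e gI range(2) gain_windows(1-4,6) near1[THEN conjunct2]
        near2[THEN conjunct2] base(2,4) levels(6) levels(3) refl levels(4) levels(7) amounts(6)]
    unfolding f'_def by blast
  ultimately show ?thesis
    using that[of f f' X' Y'] by simp
qed

lemma speedup_exchange_small:
  fixes h g :: "real \<Rightarrow> real"
  assumes sp: "speedup B s s'"
    and unif: "\<forall>a\<in>{0..B}. \<forall>b\<in>{0..B}. \<bar>a - b\<bar> < \<rho> \<longrightarrow> \<bar>s' a - s' b\<bar> \<le> e"
    and e: "0 < e" "e \<le> 1"
    and alloc: "\<And>t. 0 < t \<Longrightarrow> 0 \<le> h t \<and> 0 \<le> g t \<and> h t + g t \<le> B"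
    and rc: "\<And>t. 0 < t \<Longrightarrow> continuous (at_right t) h \<and> continuous (at_right t) g"
    and hI: "((\<lambda>t. s (h t)) has_integral X) {0..Th}"
    and gI: "((\<lambda>t. s (g t)) has_integral Y) {0..Tg}"
    and t: "0 < t1" "0 < t2" "max t1 t2 < min Th Tg"
    and pos: "0 < g t1" "g t2 = 0"
    and \<mu>: "0 < \<mu>" "0 < k * \<mu>" "k * \<mu> + 2 * \<mu> < \<rho>" "k * \<mu> + 2 * \<mu> < h t1"
      "k * \<mu> + 2 * \<mu> < g t1" "k * \<mu> + 2 * \<mu> < h t2"
    and gain_i: "0 < (k - 2 * e) * s' (h t1) - e * (k + 2 * e) - (1 + 2 * e) * s' (h t2) - e * (1 + 2 * e)"
    and gain_j: "0 < (1 - 2 * e) * s' 0 - e * (1 + 2 * e) - (k + 2 * e) * s' (g t1) - e * (k + 2 * e)"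
  obtains f f' X' Y' where
    "\<And>t. 0 < t \<Longrightarrow> 0 \<le> f t \<and> 0 \<le> f' t \<and> f t + f' t \<le> h t + g t"
    "\<And>t. 0 < t \<Longrightarrow> continuous (at_right t) f \<and> continuous (at_right t) f'"
    "((\<lambda>t. s (f t)) has_integral X') {0..Th}" "X < X'"
    "((\<lambda>t. s (f' t)) has_integral Y') {0..Tg}" "Y < Y'"
proof -
  define \<eta> where "\<eta> = e * \<mu>"
  have \<eta>: "0 < \<eta>" "\<eta> \<le> \<mu>"
    using e \<mu>(1) by (simp_all add: \<eta>_def mult_left_le_one_le)
  have "t1 \<noteq> t2"
    using pos by auto
  then obtain \<delta> where \<delta>: "0 < \<delta>" "\<delta> < \<bar>t1 - t2\<bar>" "max t1 t2 + \<delta> \<le> min Th Tg"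
    "\<And>t. t \<in> {t1..t1 + \<delta>} \<Longrightarrow> \<bar>h t - h t1\<bar> < \<eta> \<and> \<bar>g t - g t1\<bar> < \<eta>"
    "\<And>t. t \<in> {t2..t2 + \<delta>} \<Longrightarrow> \<bar>h t - h t2\<bar> < \<eta> \<and> \<bar>g t - g t2\<bar> < \<eta>"
    using right_continuous_two_windows[of t1 h g t2, OF _ _ _ _ _ t(3) \<eta>(1)] rc t(1,2) by blast
  have near2: "\<bar>h t - h t2\<bar> < \<eta> \<and> \<bar>g t - 0\<bar> < \<eta>" if "t \<in> {t2..t2 + \<delta>}" for t
    using \<delta>(5)[OF that] pos(2) by simp
  have base: "h t1 \<in> {0..B}" "g t1 \<in> {0..B}" "h t2 \<in> {0..B}" "0 \<in> {0..B}"
    using alloc[OF t(1)] alloc[OF t(2)] by auto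
  have amounts: "0 \<le> h t1 + k * \<mu> - \<eta>" "0 \<le> g t1 - k * \<mu> - \<eta>" "0 \<le> h t2 - \<mu> - \<eta>"
    "0 \<le> 0 + \<mu> - \<eta>" "\<bar>k * \<mu>\<bar> + \<eta> < \<rho>" "\<bar>\<mu>\<bar> + \<eta> < \<rho>"
    using \<mu> \<eta> by (simp_all add: abs_of_pos)
  obtain f f' X' Y' where f: "\<And>t. 0 < t \<Longrightarrow> 0 \<le> f t \<and> 0 \<le> f' t \<and> f t + f' t \<le> h t + g t"
    "\<And>t. 0 < t \<Longrightarrow> continuous (at_right t) f \<and> continuous (at_right t) f'"
    and X': "((\<lambda>t. s (f t)) has_integral X') {0..Th}"
      "X + \<delta> * ((k * \<mu> - 2 * \<eta>) * s' (h t1) - e * (\<bar>k * \<mu>\<bar> + 2 * \<eta>) +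
        ((- \<mu> - 2 * \<eta>) * s' (h t2) - e * (\<bar>\<mu>\<bar> + 2 * \<eta>))) \<le> X'"
    and Y': "((\<lambda>t. s (f' t)) has_integral Y') {0..Tg}"
      "Y + \<delta> * ((- (k * \<mu>) - 2 * \<eta>) * s' (g t1) - e * (\<bar>k * \<mu>\<bar> + 2 * \<eta>) +
        ((\<mu> - 2 * \<eta>) * s' 0 - e * (\<bar>\<mu>\<bar> + 2 * \<eta>))) \<le> Y'"
    using speedup_two_window_transfer[OF sp unif less_imp_le[OF e(1)] alloc rc hI gI t(1,2)
        less_imp_le[OF \<delta>(1)] \<delta>(2-4) near2 base amounts]
    by blast
  have "X < X'"
  proof -
    have "0 < \<delta> * (\<mu> * ((k - 2 * e) * s' (h t1) - e * (k + 2 * e) - (1 + 2 * e) * s' (h t2) - e * (1 + 2 * e)))"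
      using \<delta>(1) \<mu>(1) gain_i by simp
    then show ?thesis
      using X'(2) \<mu>(1,2) by (simp add: \<eta>_def algebra_simps)
  qed
  moreover have "Y < Y'"
  proof -
    have "0 < \<delta> * (\<mu> * ((1 - 2 * e) * s' 0 - e * (1 + 2 * e) - (k + 2 * e) * s' (g t1) - e * (k + 2 * e)))"
      using \<delta>(1) \<mu>(1) gain_j by simp
    then show ?thesis
      using Y'(2) \<mu>(1,2) by (simp add: \<eta>_def algebra_simps)
  qed
  ultimately show ?thesis
    using that f X'(1) Y'(1) by blast
qed

lemma speedup_exchange:
  fixes h g :: "real \<Rightarrow> real"
  assumes sp: "speedup B s s'"
    and alloc: "\<And>t. 0 < t \<Longrightarrow> 0 \<le> h t \<and> 0 \<le> g t \<and> h t + g t \<le> B"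
    and rc: "\<And>t. 0 < t \<Longrightarrow> continuous (at_right t) h \<and> continuous (at_right t) g"
    and hI: "((\<lambda>t. s (h t)) has_integral X) {0..Th}"
    and gI: "((\<lambda>t. s (g t)) has_integral Y) {0..Tg}"
    and t: "0 < t1" "0 < t2" "max t1 t2 < min Th Tg"
    and pos: "0 < h t1" "0 < g t1" "0 < h t2" "g t2 = 0"
    and rates: "s' (h t2) / s' 0 < s' (h t1) / s' (g t1)"
  obtains f f' X' Y' where
    "\<And>t. 0 < t \<Longrightarrow> 0 \<le> f t \<and> 0 \<le> f' t \<and> f t + f' t \<le> h t + g t"
    "\<And>t. 0 < t \<Longrightarrow> continuous (at_right t) f \<and> continuous (at_right t) f'"
    "((\<lambda>t. s (f t)) has_integral X') {0..Th}" "X < X'"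
    "((\<lambda>t. s (f' t)) has_integral Y') {0..Tg}" "Y < Y'"
proof -
  have "h t1 + g t1 \<le> B" "h t2 \<le> B"
    using alloc[OF t(1)] alloc[OF t(2)] by auto
  then obtain k e where k: "0 < k" "0 < e" "e \<le> 1"
    and gains: "0 < (k - 2 * e) * s' (h t1) - e * (k + 2 * e) - (1 + 2 * e) * s' (h t2) - e * (1 + 2 * e)"
      "0 < (1 - 2 * e) * s' 0 - e * (1 + 2 * e) - (k + 2 * e) * s' (g t1) - e * (k + 2 * e)"
    using exchange_rate_choice[of "s' (h t1)" "s' (g t1)" "s' (h t2)" "s' 0"] rates pos
      speedup_deriv_pos[OF sp] speedup_deriv_nonneg[OF sp] speedupD(1)[OF sp] by auto
  have "uniformly_continuous_on {0..B} s'"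
    using compact_uniformly_continuous[OF speedupD(6)[OF sp] compact_Icc] .
  then obtain \<rho> where "0 < \<rho>"
    and "\<forall>a\<in>{0..B}. \<forall>b\<in>{0..B}. dist b a < \<rho> \<longrightarrow> dist (s' b) (s' a) < e"
    using k(2) unfolding uniformly_continuous_on_def by blast
  then have \<rho>: "0 < \<rho>" "\<forall>a\<in>{0..B}. \<forall>b\<in>{0..B}. \<bar>a - b\<bar> < \<rho> \<longrightarrow> \<bar>s' a - s' b\<bar> \<le> e"
    by (auto simp: dist_real_def abs_minus_commute less_imp_le)
  define m where "m = min (min \<rho> (h t1)) (min (g t1) (h t2))"
  define \<mu> where "\<mu> = m / (2 * (k + 2))"
  have "(k + 2) * \<mu> = m / 2"
    using k(1) by (simp add: \<mu>_def field_simps)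
  then have "k * \<mu> + 2 * \<mu> = m / 2"
    by (simp add: algebra_simps)
  moreover have m: "0 < m" "m \<le> \<rho>" "m \<le> h t1" "m \<le> g t1" "m \<le> h t2"
    using \<rho>(1) pos by (simp_all add: m_def)
  moreover have "0 < \<mu>"
    using m(1) k(1) by (simp add: \<mu>_def)
  ultimately have "0 < \<mu>" "0 < k * \<mu>" "k * \<mu> + 2 * \<mu> < \<rho>" "k * \<mu> + 2 * \<mu> < h t1"
    "k * \<mu> + 2 * \<mu> < g t1" "k * \<mu> + 2 * \<mu> < h t2"
    using k(1) by simp_all
  from speedup_exchange_small[OF sp \<rho>(2) k(2,3) alloc rc hI gI t pos(2,4) this gains] that
  show ?thesis
    by blast
qed

theorem theorem2:
  fixes M :: nat and x w :: "nat \<Rightarrow> real" and B :: real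
    and s s' :: "real \<Rightarrow> real"
    and \<theta> :: "nat \<Rightarrow> real \<Rightarrow> real" and T :: "nat \<Rightarrow> real"
    and i j :: nat and t1 t2 :: real
  assumes sp: "speedup B s s'"
    and x_pos: "\<forall>k<M. x k > 0"
    and x_dec: "\<forall>k l. k \<le> l \<and> l < M \<longrightarrow> x l \<le> x k"
    and w_pos: "\<forall>k<M. w k > 0"
    and w_inc: "\<forall>k l. k \<le> l \<and> l < M \<longrightarrow> w k \<le> w l"
    and opt: "optimal_schedule M x w B s \<theta> T"
    and ij: "i < M" "j < M"
    and t_pos: "t1 > 0" "t2 > 0"
    and t_lt: "max t1 t2 < min (T i) (T j)"
    and h1: "\<theta> i t1 > 0" "\<theta> j t1 > 0"
    and h2: "\<theta> i t2 > 0" "\<theta> j t2 = 0"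
  shows "s' (\<theta> i t1) / s' (\<theta> j t1) \<le> s' (\<theta> i t2) / s' 0"
proof (rule ccontr)
  assume "\<not> ?thesis"
  then have rates: "s' (\<theta> i t2) / s' 0 < s' (\<theta> i t1) / s' (\<theta> j t1)"
    by simp
  have feas: "feasible_schedule M x B s \<theta> T"
    using opt unfolding optimal_schedule_def by blast
  have "i \<noteq> j"
    using h2 by auto
  have alloc: "0 \<le> \<theta> i t \<and> 0 \<le> \<theta> j t \<and> \<theta> i t + \<theta> j t \<le> B" if "0 < t" for t
    using feasible_scheduleD(1)[OF feas _ that] feasible_schedule_pair_le[OF feas ij \<open>i \<noteq> j\<close> that] ij
    by blast
  have rc: "continuous (at_right t) (\<theta> i) \<and> continuous (at_right t) (\<theta> j)" if "0 < t" for t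
    using feasible_scheduleD(2)[OF feas _ that] ij by blast
  obtain f f' X' Y' where new: "\<And>t. 0 < t \<Longrightarrow> 0 \<le> f t \<and> 0 \<le> f' t \<and> f t + f' t \<le> \<theta> i t + \<theta> j t"
    "\<And>t. 0 < t \<Longrightarrow> continuous (at_right t) f \<and> continuous (at_right t) f'"
    "((\<lambda>t. s (f t)) has_integral X') {0..T i}" "x i < X'"
    "((\<lambda>t. s (f' t)) has_integral Y') {0..T j}" "x j < Y'"
    using speedup_exchange[OF sp alloc rc feasible_scheduleD(4)[OF feas ij(1)]
        feasible_scheduleD(4)[OF feas ij(2)] t_pos t_lt h1 h2 rates]
    by blast
  have "0 \<le> x i" "0 \<le> x j"
    using x_pos ij by auto
  then obtain \<theta>' T' where "feasible_schedule M x B s \<theta>' T'" "T' i < T i" "\<And>l. T' l \<le> T l"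
    using feasible_schedule_replace_pair[OF feas ij \<open>i \<noteq> j\<close> _ _ new(1-5) less_imp_le[OF new(6)]]
    by blast
  then show False
    using opt total_cost_less[OF w_pos ij(1)] unfolding optimal_schedule_def by (meson not_le)
qed

end
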